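(* Let $n\geq 6$ and $p\geq 2$. Then $\rho(\mathbf{S}_{p}(B_{4}))<\rho(\mathbf{S}_{p}(B_{3}))$.
   Context: All graphs are simple and connected; $d_i$ is the degree of $v_i$. The $p$-Sombor matrix $\mathbf{S}_{p}(G)$ has $(i,j)$-entry $(d_i^{p}+d_j^{p})^{1/p}$ if $v_iv_j\in E(G)$ and $0$ otherwise; $\rho(\mathbf{S}_{p}(G))$ is its largest eigenvalue. The diamond is $K_4$ minus an edge; call its two adjacent degree-3 vertices $u,v$ and its two nonadjacent degree-2 vertices $a,b$. $B_3$ is the graph of order $n$ obtained from the diamond by attaching $n-5$ pendant vertices to $u$ and one pendant vertex to $v$; $B_4$ is the graph of order $n$ obtained from the diamond by attaching $n-4$ pendant vertices to $a$. *)

theory Defs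
  imports Complex_Main "Jordan_Normal_Form.Char_Poly"
begin

(* A simple graph on the vertex set {0..<n} is given by a symmetric,
   irreflexive edge predicate E. *)

definition degree :: "nat \<Rightarrow> (nat \<Rightarrow> nat \<Rightarrow> bool) \<Rightarrow> nat \<Rightarrow> nat" where
  "degree n E i = card {j \<in> {0..<n}. E i j}"

definition sombor_matrix :: "nat \<Rightarrow> (nat \<Rightarrow> nat \<Rightarrow> bool) \<Rightarrow> real \<Rightarrow> real mat" where
  "sombor_matrix n E p = mat n n (\<lambda>(i,j).
      if E i j then (real (degree n E i) powr p + real (degree n E j) powr p) powr (1/p) else 0)"

(* largest (real) eigenvalue; the matrix is real symmetric so all eigenvalues are real *)
definition rho :: "real mat \<Rightarrow> real" where
  "rho A = Max {k. eigenvalue A k}"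

(* Diamond on vertices u = 0, v = 1 (adjacent, degree 3), a = 2, b = 3 (nonadjacent). *)
definition diamond_edge :: "nat \<Rightarrow> nat \<Rightarrow> bool" where
  "diamond_edge i j = ({i,j} \<in> {{0,1},{0,2},{0,3},{1,2},{1,3}})"

(* B3: diamond, n-5 pendant vertices 5..n-1 attached to u = 0,
   one pendant vertex 4 attached to v = 1. *)
definition B3_edge :: "nat \<Rightarrow> nat \<Rightarrow> bool" where
  "B3_edge i j = (diamond_edge i j \<or> {i,j} = {1,4} \<or>
      (\<exists>k. 5 \<le> k \<and> {i,j} = {0,k}))"

(* B4: diamond, n-4 pendant vertices 4..n-1 attached to a = 2. *)
definition B4_edge :: "nat \<Rightarrow> nat \<Rightarrow> bool" where
  "B4_edge i j = (diamond_edge i j \<or> (\<exists>k. 4 \<le> k \<and> {i,j} = {2,k}))"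

end

(* Both spectral radii are reached through equitable partitions of the vertex sets.  For B4 the
   quotient eigen-equations have, at any root t4 >= 8 of a secular function, a solution that lifts
   to a positive eigenvector of the nonnegative p-Sombor matrix, so t4 is its spectral radius
   (a Collatz-Wielandt argument).  For B3 every root t3 of its secular function is an eigenvalue.
   It therefore suffices to find M with B4_secular >= 0 > B3_secular at M, giving roots
   t4 <= M < t3 by the intermediate value theorem.  For n >= 10 the root t4 itself works: subtracting
   the two secular equations leaves a convexity inequality for y |-> (D^p + y^p)^(1/p).  For
   6 <= n <= 9 an explicit M is checked, using that the entries lie between the l_3 and l_2 norms of
   the degree pairs when p <= 3, and between the maximum and the l_3 norm when p >= 3. *)

theory Submission
  imports Defs "HOL-Analysis.Convex"
begin

definition pnorm :: "real \<Rightarrow> real \<Rightarrow> real \<Rightarrow> real" where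
  "pnorm p x y = (x powr p + y powr p) powr (1/p)"

lemma pnorm_commute: "pnorm p x y = pnorm p y x"
  unfolding pnorm_def by (simp add: add.commute)

lemma pnorm_nonneg: "0 \<le> pnorm p x y"
  unfolding pnorm_def by simp

lemma pnorm_pos:
  assumes "0 < x" "0 < y"
  shows "0 < pnorm p x y"
proof -
  have "0 < x powr p + y powr p" using assms by (simp add: add_pos_pos)
  then show ?thesis unfolding pnorm_def by simp
qed

lemma pnorm_powr:
  assumes "0 < x" "0 < y" "0 < p"
  shows "pnorm p x y powr p = x powr p + y powr p"
proof -
  have "0 < x powr p + y powr p" using assms by (simp add: add_pos_pos)
  then show ?thesis unfolding pnorm_def using assms by (simp add: powr_powr)
qed

lemma pnorm_power_of_nat:
  assumes "0 < x" "0 < y" "0 < m"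
  shows "pnorm (real m) x y ^ m = x ^ m + y ^ m"
  using pnorm_powr[of x y "real m"] pnorm_pos[of x y] assms by (simp add: powr_realpow)

lemma pnorm_ge_left:
  assumes "0 < x" "0 < y" "0 < p"
  shows "x \<le> pnorm p x y"
proof -
  have "x = (x powr p) powr (1/p)" using assms by (simp add: powr_powr)
  also have "\<dots> \<le> pnorm p x y"
    unfolding pnorm_def by (rule powr_mono2) (use assms in auto)
  finally show ?thesis .
qed

lemma pnorm_ge_right: "0 < x \<Longrightarrow> 0 < y \<Longrightarrow> 0 < p \<Longrightarrow> y \<le> pnorm p x y"
  using pnorm_ge_left[of y x p] by (simp add: pnorm_commute)

lemma pnorm_mono_right:
  assumes "0 < x" "0 < y" "y \<le> z" "0 < p"
  shows "pnorm p x y \<le> pnorm p x z"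
proof -
  have "y powr p \<le> z powr p" using assms by (intro powr_mono2) auto
  then show ?thesis
    unfolding pnorm_def using assms by (intro powr_mono2) auto
qed

lemma pnorm_antimono_exponent:
  assumes "0 < x" "0 < y" "0 < p" "p \<le> q"
  shows "pnorm q x y \<le> pnorm p x y"
proof -
  \<comment> \<open>After dividing by N both coordinates lie in [0, 1], where powers decrease with the exponent.\<close>
  define N where "N = pnorm p x y"
  have N: "0 < N" "x \<le> N" "y \<le> N"
    unfolding N_def using assms by (auto intro: pnorm_pos pnorm_ge_left pnorm_ge_right)
  have "(x/N) powr q \<le> (x/N) powr p" "(y/N) powr q \<le> (y/N) powr p"
    using assms N by (auto intro!: powr_mono')
  moreover have "(x/N) powr p + (y/N) powr p = 1"
  proof -
    have "(x/N) powr p + (y/N) powr p = (x powr p + y powr p) / N powr p"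
      using assms N by (simp add: powr_divide add_divide_distrib)
    also have "\<dots> = 1"
      using pnorm_powr[of x y p] assms N add_pos_pos[of "x powr p" "y powr p"]
      unfolding N_def by simp
    finally show ?thesis .
  qed
  ultimately have "(x/N) powr q + (y/N) powr q \<le> 1" by linarith
  then have "x powr q + y powr q \<le> N powr q"
    using N assms by (simp add: powr_divide add_divide_distrib[symmetric] divide_le_eq)
  then have "pnorm q x y \<le> (N powr q) powr (1/q)"
    unfolding pnorm_def using assms by (intro powr_mono2) auto
  also have "\<dots> = N" using N assms by (simp add: powr_powr)
  finally show ?thesis unfolding N_def .
qed

lemma pnorm_power_le:
  assumes "0 < x" "0 < y" "0 < m" "real m \<le> p"
  shows "pnorm p x y ^ m \<le> x ^ m + y ^ m"
proof -
  have "pnorm p x y ^ m \<le> pnorm (real m) x y ^ m"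
    using assms by (intro power_mono pnorm_antimono_exponent less_imp_le[OF pnorm_pos]) auto
  then show ?thesis using pnorm_power_of_nat[OF assms(1-3)] by simp
qed

lemma pnorm_power_ge:
  assumes "0 < x" "0 < y" "0 < p" "p \<le> real m"
  shows "x ^ m + y ^ m \<le> pnorm p x y ^ m"
proof -
  have "0 < m" using assms by linarith
  have "pnorm (real m) x y ^ m \<le> pnorm p x y ^ m"
    using assms by (intro power_mono pnorm_antimono_exponent less_imp_le[OF pnorm_pos]) auto
  then show ?thesis using pnorm_power_of_nat[OF assms(1,2) \<open>0 < m\<close>] by simp
qed

lemma pnorm_sq_le: "0 < x \<Longrightarrow> 0 < y \<Longrightarrow> 2 \<le> p \<Longrightarrow> pnorm p x y ^ 2 \<le> x^2 + y^2"
  using pnorm_power_le[of x y 2 p] by simp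

(* The bounds below are the first terms of the binomial series of x * (1 + u) powr (1/3) with
   u = (y/x)^3, which is pnorm 3 x y. *)
lemma pnorm_le_cubic:
  assumes "0 < x" "0 < y" "3 \<le> p"
  defines "u \<equiv> (y/x)^3"
  shows "pnorm p x y \<le> x * (1 + u/3)"
proof -
  have u: "0 \<le> u" "y^3 = x^3 * u" unfolding u_def using assms by (auto simp: power_divide)
  have "1 + u \<le> (1 + u/3)^3"
    using u(1) by (simp add: power3_eq_cube field_simps)
  then have "x^3 * (1 + u) \<le> x^3 * (1 + u/3)^3"
    using assms by (intro mult_left_mono) auto
  then have "x^3 + y^3 \<le> (x * (1 + u/3))^3"
    unfolding power_mult_distrib using u(2) by (simp add: algebra_simps)
  then have "pnorm p x y ^ 3 \<le> (x * (1 + u/3))^3"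
    using pnorm_power_le[of x y 3 p] assms by linarith
  then show ?thesis
    using u(1) assms power_mono_iff[of "pnorm p x y" "x * (1 + u/3)" 3] pnorm_pos[of x y p]
    by simp
qed

lemma pnorm_ge_cubic:
  assumes "0 < y" "y \<le> x" "0 < p" "p \<le> 3"
  defines "u \<equiv> (y/x)^3"
  shows "x * (1 + u/3 - u^2/9) \<le> pnorm p x y"
proof -
  have u: "0 \<le> u" "u \<le> 1" "y^3 = x^3 * u"
    unfolding u_def using assms by (auto simp: power_divide power_le_one)
  have "(1/3 - u/9)^3 \<le> (1/3)^3"
    using u(1,2) by (intro power_mono) auto
  then have "0 \<le> 2/9 - u/27 - (1/3 - u/9)^3"
    using u(2) by (simp add: power3_eq_cube)
  then have "0 \<le> u^3 * (2/9 - u/27 - (1/3 - u/9)^3)"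
    using u(1) by simp
  also have "u^3 * (2/9 - u/27 - (1/3 - u/9)^3) = 1 + u - (1 + u/3 - u^2/9)^3"
    by (simp add: field_simps power3_eq_cube power2_eq_square)
  finally have "(1 + u/3 - u^2/9)^3 \<le> 1 + u" by simp
  then have "x^3 * (1 + u/3 - u^2/9)^3 \<le> x^3 * (1 + u)"
    using assms by (intro mult_left_mono) auto
  then have "(x * (1 + u/3 - u^2/9))^3 \<le> x^3 + y^3"
    unfolding power_mult_distrib using u(3) by (simp add: algebra_simps)
  then have "(x * (1 + u/3 - u^2/9))^3 \<le> pnorm p x y ^ 3"
    using pnorm_power_ge[of x y p 3] assms by linarith
  moreover have "u^2 \<le> 1"
    using u(1,2) by (simp add: power_le_one)
  then have "0 \<le> 1 + u/3 - u^2/9"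
    using u(1) by simp
  ultimately show ?thesis
    using assms pnorm_pos[of x y p] power_mono_iff[of "x * (1 + u/3 - u^2/9)" "pnorm p x y" 3]
    by simp
qed

lemma pnorm_has_real_derivative_right:
  assumes "0 < x" "0 < y" "0 < p"
  shows "(pnorm p x has_real_derivative (y powr p / (x powr p + y powr p)) powr ((p - 1) / p)) (at y)"
proof -
  define S where "S = x powr p + y powr p"
  have S: "0 < S" unfolding S_def using assms by (simp add: add_pos_pos)
  have "((\<lambda>y. x powr p + y powr p) has_real_derivative p * y powr (p - 1)) (at y)"
    using assms by (auto intro!: derivative_eq_intros)
  from DERIV_fun_powr[OF this, of "1/p"]
  have "(pnorm p x has_real_derivative (1/p) * S powr (1/p - 1) * (p * y powr (p - 1))) (at y)"
    using S unfolding pnorm_def[abs_def] S_def by simp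
  moreover have "(1/p) * S powr (1/p - 1) * (p * y powr (p - 1)) = (y powr p / S) powr ((p - 1) / p)"
  proof -
    define e where "e = (p - 1) / p"
    have "1/p - 1 = - e" unfolding e_def using assms by (simp add: field_simps)
    then have "(1/p) * S powr (1/p - 1) * (p * y powr (p - 1)) = y powr (p - 1) / S powr e"
      using assms by (simp add: powr_minus_divide)
    also have "\<dots> = (y powr p) powr e / S powr e"
      unfolding e_def using assms by (simp add: powr_powr)
    also have "\<dots> = (y powr p / S) powr e"
      using S by (simp add: powr_divide)
    finally show ?thesis unfolding e_def .
  qed
  ultimately show ?thesis unfolding S_def by simp
qed

lemma convex_on_pnorm:
  assumes "0 < x" "1 \<le> p"
  shows "convex_on {0<..} (pnorm p x)"
proof (rule convex_on_realI)
  fix y z :: real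
  assume yz: "y \<in> {0<..}" "z \<in> {0<..}" "y \<le> z"
  have "y powr p \<le> z powr p" using yz assms by (intro powr_mono2) auto
  then have "x powr p * y powr p \<le> x powr p * z powr p"
    by (rule mult_left_mono) simp
  then have "y powr p * (x powr p + z powr p) \<le> z powr p * (x powr p + y powr p)"
    by (simp add: algebra_simps)
  moreover have "0 < x powr p + y powr p" "0 < x powr p + z powr p"
    using yz assms by (simp_all add: add_pos_pos)
  ultimately have "y powr p / (x powr p + y powr p) \<le> z powr p / (x powr p + z powr p)"
    by (simp add: field_simps)
  then show "(y powr p / (x powr p + y powr p)) powr ((p - 1) / p)
      \<le> (z powr p / (x powr p + z powr p)) powr ((p - 1) / p)"
    using assms by (intro powr_mono2) auto
qed (use assms pnorm_has_real_derivative_right in auto)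

lemma pnorm_midpoint_convex:
  assumes "0 < x" "1 \<le> p" "0 < h" "h < y"
  shows "2 * pnorm p x y \<le> pnorm p x (y - h) + pnorm p x (y + h)"
proof -
  have "pnorm p x ((1 - 1/2) *\<^sub>R (y - h) + (1/2) *\<^sub>R (y + h))
      \<le> (1 - 1/2) * pnorm p x (y - h) + (1/2) * pnorm p x (y + h)"
    using assms by (intro convex_onD[OF convex_on_pnorm]) auto
  then show ?thesis by (simp add: field_simps)
qed

lemma pnorm_sq_convex:
  assumes "0 < D" "1 \<le> p"
  shows "pnorm p D 1 ^ 2 + 2 * pnorm p D 3 ^ 2 \<le> pnorm p D 4 ^ 2 + 2 * pnorm p D 2 ^ 2"
proof -
  have "2 * pnorm p D 3 \<le> pnorm p D 2 + pnorm p D 4"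
    using pnorm_midpoint_convex[of D p 1 3] assms by simp
  then have "(2 * pnorm p D 3)^2 \<le> (pnorm p D 2 + pnorm p D 4)^2"
    using assms by (intro power_mono) (auto intro: pnorm_nonneg)
  moreover have "(pnorm p D 2 + pnorm p D 4)^2 \<le> 2 * pnorm p D 2 ^ 2 + 2 * pnorm p D 4 ^ 2"
    using zero_le_power2[of "pnorm p D 2 - pnorm p D 4"] by (simp add: power2_eq_square algebra_simps)
  moreover have "pnorm p D 1 ^ 2 \<le> pnorm p D 2 ^ 2"
    using assms by (intro power_mono pnorm_mono_right pnorm_nonneg) auto
  ultimately show ?thesis by (simp add: power_mult_distrib)
qed

lemma finite_eigenvalues:
  fixes A :: "'a :: field mat"
  assumes A: "A \<in> carrier_mat n n"
  shows "finite {k. eigenvalue A k}"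
proof -
  have "char_poly A \<noteq> 0"
    using degree_monic_char_poly[OF A] by auto
  then have "finite {k. poly (char_poly A) k = 0}" by (rule poly_roots_finite)
  then show ?thesis using eigenvalue_root_char_poly[OF A] by simp
qed

lemma eigenvalue_le_rho:
  assumes "A \<in> carrier_mat n n" "eigenvalue A k"
  shows "k \<le> rho A"
  unfolding rho_def using finite_eigenvalues[OF assms(1)] assms(2) by (intro Max_ge) auto

lemma eigenvalueI:
  assumes "A \<in> carrier_mat n n" "v \<in> carrier_vec n" "v \<noteq> 0\<^sub>v n" "A *\<^sub>v v = k \<cdot>\<^sub>v v"
  shows "eigenvalue A k"
  using assms unfolding eigenvalue_def eigenvector_def by auto

lemma abs_eigenvalue_le_positive_eigenvalue:
  fixes A :: "real mat"
  assumes A: "A \<in> carrier_mat n n" and nonneg: "\<And>i j. i < n \<Longrightarrow> j < n \<Longrightarrow> 0 \<le> A $$ (i, j)"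
    and x: "x \<in> carrier_vec n" "\<And>i. i < n \<Longrightarrow> 0 < x $ i" and Ax: "A *\<^sub>v x = t \<cdot>\<^sub>v x"
    and k: "eigenvalue A k"
  shows "\<bar>k\<bar> \<le> t"
proof -
  obtain v where v: "v \<in> carrier_vec n" "v \<noteq> 0\<^sub>v n" "A *\<^sub>v v = k \<cdot>\<^sub>v v"
    using k A unfolding eigenvalue_def eigenvector_def by auto
  have "\<exists>j<n. v $ j \<noteq> 0"
  proof (rule ccontr)
    assume "\<not> ?thesis"
    then have "v = 0\<^sub>v n" using v(1) by (intro eq_vecI) auto
    with v(2) show False ..
  qed
  then obtain j0 where j0: "j0 < n" "v $ j0 \<noteq> 0" by blast
  define r where "r j = \<bar>v $ j\<bar> / x $ j" for j
  have fin: "finite (r ` {..<n})" "r ` {..<n} \<noteq> {}" using j0 by auto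
  obtain i where i: "i < n" "r i = Max (r ` {..<n})" using Max_in[OF fin] by auto
  have r_le: "r j \<le> r i" if "j < n" for j using i fin that by simp
  have "0 < r j0" unfolding r_def using j0 x(2) by simp
  then have vi: "0 < \<bar>v $ i\<bar>" "\<bar>v $ i\<bar> = r i * x $ i"
    using r_le[OF j0(1)] x(2)[OF i(1)] unfolding r_def by auto
  have row: "(A *\<^sub>v w) $ i = (\<Sum>j<n. A $$ (i, j) * w $ j)" if "w \<in> carrier_vec n" for w
    using A that i(1) by (simp add: scalar_prod_def atLeast0LessThan)
  have "k * v $ i = (\<Sum>j<n. A $$ (i, j) * v $ j)"
    using v i(1) row[OF v(1)] by simp
  then have "\<bar>k\<bar> * \<bar>v $ i\<bar> = \<bar>\<Sum>j<n. A $$ (i, j) * v $ j\<bar>"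
    by (metis abs_mult)
  also have "\<dots> \<le> (\<Sum>j<n. A $$ (i, j) * \<bar>v $ j\<bar>)"
    using nonneg[OF i(1)] by (auto intro!: order_trans[OF sum_abs] sum_mono simp: abs_mult)
  also have "\<dots> \<le> (\<Sum>j<n. A $$ (i, j) * (r i * x $ j))"
  proof (intro sum_mono mult_left_mono)
    fix j assume "j \<in> {..<n}"
    then show "\<bar>v $ j\<bar> \<le> r i * x $ j" "0 \<le> A $$ (i, j)"
      using r_le[of j] x(2)[of j] nonneg[OF i(1), of j] unfolding r_def by (auto simp: field_simps)
  qed
  also have "\<dots> = r i * (A *\<^sub>v x) $ i"
    using row[OF x(1)] by (simp add: sum_distrib_left algebra_simps)
  also have "\<dots> = t * \<bar>v $ i\<bar>" using Ax x(1) i(1) vi(2) by simp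
  finally show ?thesis using vi(1) by simp
qed

lemma rho_eq_positive_eigenvalue:
  fixes A :: "real mat"
  assumes A: "A \<in> carrier_mat n n" and nonneg: "\<And>i j. i < n \<Longrightarrow> j < n \<Longrightarrow> 0 \<le> A $$ (i, j)"
    and x: "x \<in> carrier_vec n" "\<And>i. i < n \<Longrightarrow> 0 < x $ i" and Ax: "A *\<^sub>v x = t \<cdot>\<^sub>v x"
    and n: "0 < n"
  shows "rho A = t"
proof -
  have "x $ 0 \<noteq> 0" using x(2)[OF n] by simp
  then have "x \<noteq> 0\<^sub>v n" using n by auto
  then have "eigenvalue A t" using eigenvalueI[OF A x(1) _ Ax] by blast
  moreover have "k \<le> t" if "eigenvalue A k" for k
    using abs_eigenvalue_le_positive_eigenvalue[OF A nonneg x Ax that] by simp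
  ultimately show ?thesis
    unfolding rho_def using finite_eigenvalues[OF A] by (intro Max_eqI) auto
qed

(* Let D = n - 2 be the degree of u in B3 and of a in B4.  The classes {u, v}, {a}, {b},
   pendants of B4 and {u}, {v}, {a, b}, {w}, pendants of B3 (w the pendant vertex at v) are
   equitable.  Eliminating all but one unknown from the eigen-equations of the
   quotient matrices leaves the equations B4_secular p D t = 0 and B3_secular p D t = 0. *)
definition B4_denom :: "real \<Rightarrow> real \<Rightarrow> real" where
  "B4_denom p t = t^2 - pnorm p 3 3 * t - 2 * pnorm p 3 2 ^ 2"

definition B4_secular :: "real \<Rightarrow> real \<Rightarrow> real \<Rightarrow> real" where
  "B4_secular p D t = t^2 - (D - 2) * pnorm p D 1 ^ 2 - 2 * pnorm p D 3 ^ 2 * t^2 / B4_denom p t"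

definition B3_denom :: "real \<Rightarrow> real \<Rightarrow> real" where
  "B3_denom p t = t^2 - 2 * pnorm p 4 2 ^ 2 - pnorm p 4 1 ^ 2"

definition B3_secular :: "real \<Rightarrow> real \<Rightarrow> real \<Rightarrow> real" where
  "B3_secular p D t = t^2 - (D - 3) * pnorm p D 1 ^ 2 - 2 * pnorm p D 2 ^ 2
     - (t * pnorm p D 4 + 2 * pnorm p D 2 * pnorm p 4 2)^2 / B3_denom p t"

lemma pnorm_constant_bounds:
  assumes "2 \<le> p"
  shows "pnorm p 3 3 \<le> 4243/1000" "pnorm p 3 2 ^ 2 \<le> 13" "pnorm p 4 2 ^ 2 \<le> 20" "pnorm p 4 1 ^ 2 \<le> 17"
    and "4 \<le> pnorm p 4 2" "4 \<le> pnorm p 4 1"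
proof -
  have "pnorm p 3 3 ^ 2 \<le> 3^2 + 3^2"
    using pnorm_sq_le[of 3 3 p] assms by simp
  also have "\<dots> \<le> (4243/1000)^2" by (simp add: power_divide)
  finally have "pnorm p 3 3 ^ 2 \<le> (4243/1000)^2" .
  then show "pnorm p 3 3 \<le> 4243/1000" by (rule power2_le_imp_le) simp
  show "pnorm p 3 2 ^ 2 \<le> 13" "pnorm p 4 2 ^ 2 \<le> 20" "pnorm p 4 1 ^ 2 \<le> 17"
    using pnorm_sq_le[of 3 2 p] pnorm_sq_le[of 4 2 p] pnorm_sq_le[of 4 1 p] assms by simp_all
  show "4 \<le> pnorm p 4 2" "4 \<le> pnorm p 4 1"
    using assms by (simp_all add: pnorm_ge_left)
qed

lemma B4_denom_bounds:
  assumes "2 \<le> p" "8 \<le> t"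
  shows "0 < B4_denom p t" "B4_denom p t \<le> t^2"
proof -
  note b = pnorm_constant_bounds[OF assms(1)]
  have "8 * (8 - pnorm p 3 3) \<le> t * (t - pnorm p 3 3)"
    using b assms by (intro mult_mono) auto
  then show "0 < B4_denom p t"
    using b unfolding B4_denom_def by (simp add: power2_eq_square algebra_simps)
  show "B4_denom p t \<le> t^2"
    using assms mult_nonneg_nonneg[OF pnorm_nonneg[of p 3 3], of t] zero_le_power2[of "pnorm p 3 2"]
    unfolding B4_denom_def by linarith
qed

lemma B3_denom_bounds:
  assumes "2 \<le> p" "8 \<le> t"
  shows "0 < B3_denom p t" "B3_denom p t \<le> t^2 - 48"
proof -
  note b = pnorm_constant_bounds[OF assms(1)]
  have "8^2 \<le> t^2" using assms by (intro power_mono) auto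
  then show "0 < B3_denom p t" using b unfolding B3_denom_def by simp
  have "4^2 \<le> pnorm p 4 2 ^ 2" "4^2 \<le> pnorm p 4 1 ^ 2"
    using b by (intro power_mono; simp)+
  then show "B3_denom p t \<le> t^2 - 48" unfolding B3_denom_def by simp
qed

lemma B3_quotient_eigenvector:
  assumes p: "2 \<le> p" and t: "8 \<le> t" and root: "B3_secular p D t = 0"
  obtains \<beta> \<gamma> \<delta> \<epsilon> where
    "pnorm p D 4 * \<beta> + 2 * pnorm p D 2 * \<gamma> + (D - 3) * pnorm p D 1 * \<epsilon> = t"
    "pnorm p D 4 + pnorm p 4 2 * \<gamma> + pnorm p 4 2 * \<gamma> + pnorm p 4 1 * \<delta> = t * \<beta>"
    "pnorm p D 2 + pnorm p 4 2 * \<beta> = t * \<gamma>"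
    "pnorm p 4 1 * \<beta> = t * \<delta>"
    "pnorm p D 1 = t * \<epsilon>"
proof -
  define a1 a2 a4 b42 b41
    where "a1 = pnorm p D 1" and "a2 = pnorm p D 2" and "a4 = pnorm p D 4"
      and "b42 = pnorm p 4 2" and "b41 = pnorm p 4 1"
  define E where "E = B3_denom p t"
  define \<beta> where "\<beta> = (t * a4 + 2 * a2 * b42) / E"
  define \<gamma> \<delta> \<epsilon> where "\<gamma> = (a2 + b42 * \<beta>) / t" and "\<delta> = b41 * \<beta> / t" and "\<epsilon> = a1 / t"
  have E: "0 < E" unfolding E_def using B3_denom_bounds(1)[OF p t] .
  have "0 < t" using t by simp
  have "a4 * \<beta> + 2 * a2 * \<gamma> + (D - 3) * a1 * \<epsilon> = t"
  proof -
    have "(t * a4 + 2 * a2 * b42)^2 / E = (t * a4 + 2 * a2 * b42) * \<beta>"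
      unfolding \<beta>_def by (simp add: power2_eq_square)
    then have "t^2 = (D - 3) * a1^2 + 2 * a2^2 + (t * a4 + 2 * a2 * b42) * \<beta>"
      using root unfolding B3_secular_def a1_def a2_def a4_def b42_def E_def by simp
    moreover have "t * (a4 * \<beta> + 2 * a2 * \<gamma> + (D - 3) * a1 * \<epsilon>)
        = (D - 3) * a1^2 + 2 * a2^2 + (t * a4 + 2 * a2 * b42) * \<beta>"
      unfolding \<gamma>_def \<epsilon>_def using \<open>0 < t\<close> by (simp add: field_simps power2_eq_square)
    ultimately have "t * (a4 * \<beta> + 2 * a2 * \<gamma> + (D - 3) * a1 * \<epsilon>) = t * t"
      by (simp add: power2_eq_square)
    then show ?thesis using \<open>0 < t\<close> by simp
  qed
  moreover have "a4 + b42 * \<gamma> + b42 * \<gamma> + b41 * \<delta> = t * \<beta>"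
  proof -
    have "\<beta> * E = t * a4 + 2 * a2 * b42" unfolding \<beta>_def using E by simp
    then show ?thesis
      unfolding \<gamma>_def \<delta>_def using \<open>0 < t\<close>
      by (simp add: E_def B3_denom_def b42_def b41_def field_simps power2_eq_square)
  qed
  moreover have "a2 + b42 * \<beta> = t * \<gamma>" "b41 * \<beta> = t * \<delta>" "a1 = t * \<epsilon>"
    unfolding \<gamma>_def \<delta>_def \<epsilon>_def using \<open>0 < t\<close> by simp_all
  ultimately show thesis
    using that unfolding a1_def a2_def a4_def b42_def b41_def by blast
qed

lemma B4_quotient_eigenvector:
  assumes p: "2 \<le> p" and D: "0 < D" and t: "8 \<le> t" and root: "B4_secular p D t = 0"
  obtains \<beta> \<gamma> \<epsilon> where "0 < \<beta>" "0 < \<gamma>" "0 < \<epsilon>"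
    "pnorm p 3 3 * \<beta> + pnorm p D 3 + pnorm p 3 2 * \<gamma> = t * \<beta>"
    "pnorm p D 3 * \<beta> + pnorm p D 3 * \<beta> + (D - 2) * pnorm p D 1 * \<epsilon> = t"
    "pnorm p 3 2 * \<beta> + pnorm p 3 2 * \<beta> = t * \<gamma>"
    "pnorm p D 1 = t * \<epsilon>"
proof -
  define a1 a3 b33 b32
    where "a1 = pnorm p D 1" and "a3 = pnorm p D 3" and "b33 = pnorm p 3 3" and "b32 = pnorm p 3 2"
  define E where "E = B4_denom p t"
  define \<beta> where "\<beta> = a3 * t / E"
  define \<gamma> \<epsilon> where "\<gamma> = 2 * b32 * \<beta> / t" and "\<epsilon> = a1 / t"
  have E: "0 < E" unfolding E_def using B4_denom_bounds(1)[OF p t] .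
  have "0 < t" using t by simp
  then have "0 < \<beta>" "0 < \<gamma>" "0 < \<epsilon>"
    unfolding \<gamma>_def \<epsilon>_def \<beta>_def a1_def a3_def b32_def using E D by (simp_all add: pnorm_pos)
  moreover have "b33 * \<beta> + a3 + b32 * \<gamma> = t * \<beta>"
  proof -
    have "\<beta> * E = a3 * t" unfolding \<beta>_def using E by simp
    then show ?thesis
      unfolding \<gamma>_def using \<open>0 < t\<close>
      by (simp add: E_def B4_denom_def b33_def b32_def field_simps power2_eq_square)
  qed
  moreover have "a3 * \<beta> + a3 * \<beta> + (D - 2) * a1 * \<epsilon> = t"
  proof -
    have "2 * a3^2 * t^2 / E = t * (a3 * \<beta> + a3 * \<beta>)"
      unfolding \<beta>_def by (simp add: power2_eq_square)
    then have "t^2 = (D - 2) * a1^2 + t * (a3 * \<beta> + a3 * \<beta>)"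
      using root unfolding B4_secular_def a1_def a3_def E_def by simp
    moreover have "t * (a3 * \<beta> + a3 * \<beta> + (D - 2) * a1 * \<epsilon>)
        = (D - 2) * a1^2 + t * (a3 * \<beta> + a3 * \<beta>)"
      unfolding \<epsilon>_def using \<open>0 < t\<close> by (simp add: field_simps power2_eq_square)
    ultimately have "t * (a3 * \<beta> + a3 * \<beta> + (D - 2) * a1 * \<epsilon>) = t * t"
      by (simp add: power2_eq_square)
    then show ?thesis using \<open>0 < t\<close> by simp
  qed
  moreover have "b32 * \<beta> + b32 * \<beta> = t * \<gamma>" "a1 = t * \<epsilon>"
    unfolding \<gamma>_def \<epsilon>_def using \<open>0 < t\<close> by simp_all
  ultimately show thesis
    using that unfolding a1_def a3_def b33_def b32_def by blast
qed

lemma sombor_matrix_carrier: "sombor_matrix n E p \<in> carrier_mat n n"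
  unfolding sombor_matrix_def by simp

lemma sombor_matrix_nonneg: "i < n \<Longrightarrow> j < n \<Longrightarrow> 0 \<le> sombor_matrix n E p $$ (i, j)"
  unfolding sombor_matrix_def by (simp add: pnorm_nonneg[unfolded pnorm_def])

lemma sombor_matrix_mult_vec_nth:
  assumes "i < n" "x \<in> carrier_vec n"
  shows "(sombor_matrix n E p *\<^sub>v x) $ i
    = (\<Sum>j \<in> {j \<in> {0..<n}. E i j}. pnorm p (degree n E i) (degree n E j) * x $ j)"
  unfolding sum.inter_filter[OF finite_atLeastLessThan]
  using assms unfolding sombor_matrix_def pnorm_def
  by (auto simp: scalar_prod_def intro!: sum.cong)

lemma B3_neighbours:
  assumes "6 \<le> n"
  shows "{j \<in> {0..<n}. B3_edge 0 j} = {1, 2, 3} \<union> {5..<n}"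
    and "{j \<in> {0..<n}. B3_edge 1 j} = {0, 2, 3, 4}"
    and "{j \<in> {0..<n}. B3_edge 2 j} = {0, 1}"
    and "{j \<in> {0..<n}. B3_edge 3 j} = {0, 1}"
    and "{j \<in> {0..<n}. B3_edge 4 j} = {1}"
    and "5 \<le> i \<Longrightarrow> {j \<in> {0..<n}. B3_edge i j} = {0}"
  using assms by (auto simp: B3_edge_def diamond_edge_def doubleton_eq_iff)

lemma B4_neighbours:
  assumes "6 \<le> n"
  shows "{j \<in> {0..<n}. B4_edge 0 j} = {1, 2, 3}"
    and "{j \<in> {0..<n}. B4_edge 1 j} = {0, 2, 3}"
    and "{j \<in> {0..<n}. B4_edge 2 j} = {0, 1} \<union> {4..<n}"
    and "{j \<in> {0..<n}. B4_edge 3 j} = {0, 1}"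
    and "4 \<le> i \<Longrightarrow> {j \<in> {0..<n}. B4_edge i j} = {2}"
  using assms by (auto simp: B4_edge_def diamond_edge_def doubleton_eq_iff)

lemma B3_degree:
  assumes "6 \<le> n"
  shows "degree n B3_edge 0 = n - 2" and "degree n B3_edge 1 = 4"
    and "degree n B3_edge 2 = 2" and "degree n B3_edge 3 = 2" and "degree n B3_edge 4 = 1"
    and "5 \<le> i \<Longrightarrow> degree n B3_edge i = 1"
  using B3_neighbours[OF assms] assms unfolding degree_def by simp_all

lemma B4_degree:
  assumes "6 \<le> n"
  shows "degree n B4_edge 0 = 3" and "degree n B4_edge 1 = 3"
    and "degree n B4_edge 2 = n - 2" and "degree n B4_edge 3 = 2"
    and "4 \<le> i \<Longrightarrow> degree n B4_edge i = 1"
  using B4_neighbours[OF assms] assms unfolding degree_def by simp_all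

lemma B3_eigenvalue:
  assumes n: "6 \<le> n" and p: "2 \<le> p" and t: "8 \<le> t" and root: "B3_secular p (real n - 2) t = 0"
  shows "eigenvalue (sombor_matrix n B3_edge p) t"
proof -
  define D where "D = real n - 2"
  obtain \<beta> \<gamma> \<delta> \<epsilon> where eq_u: "pnorm p D 4 * \<beta> + 2 * pnorm p D 2 * \<gamma> + (D - 3) * pnorm p D 1 * \<epsilon> = t"
    and eq_v: "pnorm p D 4 + pnorm p 4 2 * \<gamma> + pnorm p 4 2 * \<gamma> + pnorm p 4 1 * \<delta> = t * \<beta>"
    and eq_ab: "pnorm p D 2 + pnorm p 4 2 * \<beta> = t * \<gamma>"
    and eq_w: "pnorm p 4 1 * \<beta> = t * \<delta>"
    and eq_pendant: "pnorm p D 1 = t * \<epsilon>"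
    using B3_quotient_eigenvector[OF p t root[folded D_def]] .
  define x where "x = vec n (\<lambda>j. if j = 0 then 1 else if j = 1 then \<beta> else if j \<le> 3 then \<gamma>
    else if j = 4 then \<delta> else \<epsilon>)"
  have x: "x \<in> carrier_vec n" unfolding x_def by simp
  have "(sombor_matrix n B3_edge p *\<^sub>v x) $ i = t * x $ i" if "i < n" for i
  proof -
    have "real n = D + 2" unfolding D_def by simp
    have deg1: "degree n B3_edge (Suc 0) = 4" using B3_degree(2)[OF n] by simp
    note row = sombor_matrix_mult_vec_nth[OF that x, of B3_edge p]
    consider "i = 0" | "i = 1" | "i = 2" | "i = 3" | "i = 4" | "5 \<le> i" by linarith
    then show ?thesis
    proof cases
      case 1
      then show ?thesis
        using row B3_neighbours[OF n] eq_u \<open>real n = D + 2\<close> n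
        by (simp add: B3_degree[OF n] deg1 x_def of_nat_diff algebra_simps)
    next
      case 2
      then show ?thesis
        using row B3_neighbours[OF n] eq_v \<open>real n = D + 2\<close> n
        by (simp add: B3_degree[OF n] deg1 x_def pnorm_commute[of p 4 D])
    next
      case 3
      then show ?thesis
        using row B3_neighbours[OF n] eq_ab \<open>real n = D + 2\<close> n
        by (simp add: B3_degree[OF n] deg1 x_def pnorm_commute[of p 2])
    next
      case 4
      then show ?thesis
        using row B3_neighbours[OF n] eq_ab \<open>real n = D + 2\<close> n
        by (simp add: B3_degree[OF n] deg1 x_def pnorm_commute[of p 2])
    next
      case 5
      then show ?thesis
        using row B3_neighbours[OF n] eq_w n
        by (simp add: B3_degree[OF n] deg1 x_def pnorm_commute[of p 1 4])
    next
      case 6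
      then show ?thesis
        using row B3_neighbours[OF n] eq_pendant \<open>real n = D + 2\<close> that
        by (simp add: B3_degree[OF n] x_def pnorm_commute[of p 1 D])
    qed
  qed
  then have "sombor_matrix n B3_edge p *\<^sub>v x = t \<cdot>\<^sub>v x"
    using x sombor_matrix_carrier[of n B3_edge p] by (intro eq_vecI) auto
  moreover have "x \<noteq> 0\<^sub>v n"
  proof
    assume "x = 0\<^sub>v n"
    then have "x $ 0 = 0" using n by simp
    then show False using n by (simp add: x_def)
  qed
  ultimately show ?thesis
    using eigenvalueI[OF sombor_matrix_carrier x] by blast
qed

lemma B4_rho_eq_root:
  assumes n: "6 \<le> n" and p: "2 \<le> p" and t: "8 \<le> t" and root: "B4_secular p (real n - 2) t = 0"
  shows "rho (sombor_matrix n B4_edge p) = t"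
proof -
  define D where "D = real n - 2"
  have "0 < D" using n unfolding D_def by simp
  obtain \<beta> \<gamma> \<epsilon> where pos: "0 < \<beta>" "0 < \<gamma>" "0 < \<epsilon>"
    and eq_uv: "pnorm p 3 3 * \<beta> + pnorm p D 3 + pnorm p 3 2 * \<gamma> = t * \<beta>"
    and eq_a: "pnorm p D 3 * \<beta> + pnorm p D 3 * \<beta> + (D - 2) * pnorm p D 1 * \<epsilon> = t"
    and eq_b: "pnorm p 3 2 * \<beta> + pnorm p 3 2 * \<beta> = t * \<gamma>"
    and eq_pendant: "pnorm p D 1 = t * \<epsilon>"
    using B4_quotient_eigenvector[OF p \<open>0 < D\<close> t root[folded D_def]] .
  define x where "x = vec n (\<lambda>j. if j \<le> 1 then \<beta> else if j = 2 then 1 else if j = 3 then \<gamma> else \<epsilon>)"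
  have x: "x \<in> carrier_vec n" "\<And>i. i < n \<Longrightarrow> 0 < x $ i"
    unfolding x_def using pos by auto
  have "(sombor_matrix n B4_edge p *\<^sub>v x) $ i = t * x $ i" if "i < n" for i
  proof -
    have "real n = D + 2" unfolding D_def by simp
    have deg1: "degree n B4_edge (Suc 0) = 3" using B4_degree(2)[OF n] by simp
    note row = sombor_matrix_mult_vec_nth[OF that x(1), of B4_edge p]
    consider "i = 0" | "i = 1" | "i = 2" | "i = 3" | "4 \<le> i" by linarith
    then show ?thesis
    proof cases
      case 1
      then show ?thesis
        using row B4_neighbours[OF n] eq_uv \<open>real n = D + 2\<close> n
        by (simp add: B4_degree[OF n] deg1 x_def pnorm_commute[of p 3 D])
    next
      case 2
      then show ?thesis
        using row B4_neighbours[OF n] eq_uv \<open>real n = D + 2\<close> n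
        by (simp add: B4_degree[OF n] deg1 x_def pnorm_commute[of p 3 D])
    next
      case 3
      then show ?thesis
        using row B4_neighbours[OF n] eq_a \<open>real n = D + 2\<close> n
        by (simp add: B4_degree[OF n] deg1 x_def of_nat_diff algebra_simps)
    next
      case 4
      then show ?thesis
        using row B4_neighbours[OF n] eq_b n
        by (simp add: B4_degree[OF n] deg1 x_def pnorm_commute[of p 2 3])
    next
      case 5
      then show ?thesis
        using row B4_neighbours[OF n] eq_pendant \<open>real n = D + 2\<close> that
        by (simp add: B4_degree[OF n] x_def pnorm_commute[of p 1 D])
    qed
  qed
  then have "sombor_matrix n B4_edge p *\<^sub>v x = t \<cdot>\<^sub>v x"
    using x(1) sombor_matrix_carrier[of n B4_edge p] by (intro eq_vecI) auto
  then show ?thesis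
    using rho_eq_positive_eigenvalue[OF sombor_matrix_carrier sombor_matrix_nonneg x] n by simp
qed

lemma isCont_B4_secular: "2 \<le> p \<Longrightarrow> 8 \<le> t \<Longrightarrow> isCont (B4_secular p D) t"
  using B4_denom_bounds(1)[of p t] unfolding B4_secular_def[abs_def] B4_denom_def
  by (intro continuous_intros) auto

lemma isCont_B3_secular: "2 \<le> p \<Longrightarrow> 8 \<le> t \<Longrightarrow> isCont (B3_secular p D) t"
  using B3_denom_bounds(1)[of p t] unfolding B3_secular_def[abs_def] B3_denom_def
  by (intro continuous_intros) auto

lemma B4_secular_le:
  assumes "2 \<le> p" "2 \<le> D" "8 \<le> t"
  shows "B4_secular p D t \<le> t^2 - D^3"
proof -
  have a1: "D^2 \<le> pnorm p D 1 ^ 2" and a3: "D^2 \<le> pnorm p D 3 ^ 2"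
    using assms by (auto intro!: power_mono pnorm_ge_left)
  from a1 have "(D - 2) * D^2 \<le> (D - 2) * pnorm p D 1 ^ 2"
    using assms by (intro mult_left_mono) auto
  moreover have "2 * pnorm p D 3 ^ 2 \<le> 2 * pnorm p D 3 ^ 2 * t^2 / B4_denom p t"
    using B4_denom_bounds[OF assms(1,3)] by (simp add: le_divide_eq mult_left_mono)
  moreover have "D^3 = (D - 2) * D^2 + 2 * D^2"
    by (simp add: power2_eq_square power3_eq_cube algebra_simps)
  ultimately show ?thesis
    using a3 unfolding B4_secular_def by linarith
qed

lemma B4_secular_at_8_nonpos: "2 \<le> p \<Longrightarrow> 4 \<le> D \<Longrightarrow> B4_secular p D 8 \<le> 0"
  using B4_secular_le[of p D 8] power_mono[of 4 D 3] by simp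

lemma B4_secular_at_sq_pos:
  assumes p: "2 \<le> p" and D: "8 \<le> D"
  shows "0 < B4_secular p D (D^2)"
proof -
  define T where "T = D^2"
  have "8^2 \<le> T" unfolding T_def using D by (intro power_mono) auto
  then have T: "64 \<le> T" by simp
  have "T^2 / 2 \<le> B4_denom p T"
  proof -
    have "64 * T \<le> T * T" using T by (intro mult_right_mono) auto
    moreover have "pnorm p 3 3 * T \<le> 4243/1000 * T"
      using pnorm_constant_bounds(1)[OF p] T by (intro mult_right_mono) auto
    ultimately show ?thesis
      using pnorm_constant_bounds(2)[OF p] T unfolding B4_denom_def power2_eq_square by linarith
  qed
  moreover have "0 < T^2 / 2" "0 < B4_denom p T" using T B4_denom_bounds(1)[OF p, of T] by simp_all
  ultimately have "2 * pnorm p D 3 ^ 2 * T^2 / B4_denom p T \<le> 2 * pnorm p D 3 ^ 2 * T^2 / (T^2 / 2)"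
    by (intro divide_left_mono) auto
  also have "\<dots> = 4 * pnorm p D 3 ^ 2" using T by (simp add: field_simps)
  also have "\<dots> \<le> 4 * (D^2 + 9)" using pnorm_sq_le[of D 3 p] p D by simp
  finally have a3: "2 * pnorm p D 3 ^ 2 * T^2 / B4_denom p T \<le> 4 * (D^2 + 9)" .
  have a1: "(D - 2) * pnorm p D 1 ^ 2 \<le> (D - 2) * (D^2 + 1)"
    using pnorm_sq_le[of D 1 p] p D by (intro mult_left_mono) auto
  have "0 < D^4 - (D - 2) * (D^2 + 1) - 4 * (D^2 + 9)"
  proof -
    obtain e where e: "0 \<le> e" "D = 8 + e" using D by (metis le_add_diff_inverse diff_ge_0_iff_ge)
    have "D^4 - (D - 2) * (D^2 + 1) - 4 * (D^2 + 9) = 3414 + e * (1823 + e * (358 + e * (31 + e)))"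
      unfolding e(2) by (simp add: power_numeral_reduce algebra_simps)
    also have "0 < \<dots>" using e(1) by (intro add_pos_nonneg mult_nonneg_nonneg) auto
    finally show ?thesis .
  qed
  moreover have "T^2 = D^4" unfolding T_def by simp
  ultimately show ?thesis using a1 a3 unfolding B4_secular_def T_def[symmetric] by linarith
qed

lemma B3_secular_at_sq_pos:
  assumes p: "2 \<le> p" and D: "4 \<le> D"
  shows "0 < B3_secular p D (D^2)"
proof -
  define a1 a2 a4 b42
    where "a1 = pnorm p D 1" and "a2 = pnorm p D 2" and "a4 = pnorm p D 4" and "b42 = pnorm p 4 2"
  have a1: "a1^2 \<le> D^2 + 1" and a2: "a2^2 \<le> D^2 + 4" and a4: "a4^2 \<le> D^2 + 16"
    using pnorm_sq_le[of D 1 p] pnorm_sq_le[of D 2 p] pnorm_sq_le[of D 4 p] p D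
    unfolding a1_def a2_def a4_def by simp_all
  have "4^2 \<le> D^2" using D by (intro power_mono) auto
  then have D2: "16 \<le> D^2" by simp
  have "(D^2 * a4 + 2 * a2 * b42)^2 \<le> 2 * (D^2 * a4)^2 + 2 * (2 * a2 * b42)^2"
    using zero_le_power2[of "D^2 * a4 - 2 * a2 * b42"] by (simp add: power2_eq_square algebra_simps)
  also have "\<dots> = 2 * D^4 * a4^2 + 8 * a2^2 * b42^2"
    by (simp add: power_mult_distrib power2_eq_square power4_eq_xxxx)
  also have "\<dots> \<le> 2 * D^4 * (2 * D^2) + 8 * (D^2 + 4) * 20"
    using a2 a4 D2 pnorm_constant_bounds(3)[OF p] unfolding b42_def
    by (intro add_mono mult_left_mono mult_mono) auto
  finally have X: "(D^2 * a4 + 2 * a2 * b42)^2 \<le> 4 * D^6 + 160 * D^2 + 640"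
    by (simp add: power_numeral_reduce algebra_simps)
  have "16 * 16 \<le> D^2 * D^2" using D2 by (intro mult_mono) auto
  then have D4: "0 < D^4 - 57" by (simp add: power4_eq_xxxx power2_eq_square)
  have "D^4 - 57 \<le> B3_denom p (D^2)"
    using pnorm_constant_bounds(3,4)[OF p] unfolding B3_denom_def by (simp add: power_numeral_reduce)
  then have "(D^2 * a4 + 2 * a2 * b42)^2 / B3_denom p (D^2) \<le> (4 * D^6 + 160 * D^2 + 640) / (D^4 - 57)"
    using X D4 by (intro frac_le) auto
  also have "\<dots> < D^4 - D^3 + D^2 - D - 5"
  proof -
    obtain e where e: "0 \<le> e" "D = 4 + e" using D by (metis le_add_diff_inverse diff_ge_0_iff_ge)
    have "(D^4 - D^3 + D^2 - D - 5) * (D^4 - 57) - (4 * D^6 + 160 * D^2 + 640)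
      = 20017 + e*(67873 + e*(75539 + e*(43449 + e*(14878 + e*(3175 + e*(417 + e*(31 + e)))))))"
      unfolding e(2) by (simp add: power_numeral_reduce algebra_simps)
    also have "0 < \<dots>" using e(1) by (intro add_pos_nonneg mult_nonneg_nonneg add_nonneg_nonneg) auto
    finally show ?thesis using D4 by (simp add: divide_less_eq)
  qed
  finally have "(D^2 * a4 + 2 * a2 * b42)^2 / B3_denom p (D^2) < D^4 - D^3 + D^2 - D - 5" .
  moreover have "(D - 3) * a1^2 \<le> (D - 3) * (D^2 + 1)" using a1 D by (intro mult_left_mono) auto
  ultimately show ?thesis
    using a2 unfolding B3_secular_def a1_def[symmetric] a2_def[symmetric] a4_def[symmetric] b42_def[symmetric]
    by (simp add: power_numeral_reduce algebra_simps)
qed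

lemma B3_remainder_ge:
  assumes p: "2 \<le> p" and D: "0 < D" and t: "0 \<le> t"
  shows "D^2 * (16 * t + 48)
    \<le> (t * pnorm p D 4 + 2 * pnorm p D 2 * pnorm p 4 2)^2 - pnorm p D 4 ^ 2 * B3_denom p t"
proof -
  define a2 a4 b42 b41
    where "a2 = pnorm p D 2" and "a4 = pnorm p D 4" and "b42 = pnorm p 4 2" and "b41 = pnorm p 4 1"
  note b = pnorm_constant_bounds[OF p]
  have "D \<le> a2" "D \<le> a4"
    using D p pnorm_ge_left[of D 2 p] pnorm_ge_left[of D 4 p] unfolding a2_def a4_def by simp_all
  then have a424: "D * D * 4 \<le> a4 * a2 * b42" and a4: "D^2 \<le> a4^2"
    using b(5) D unfolding b42_def by (auto intro!: mult_mono power_mono)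
  have "48 \<le> 2 * b42^2 + b41^2"
    using b(5,6) power_mono[of 4 b42 2] power_mono[of 4 b41 2] unfolding b42_def b41_def by simp
  then have "D^2 * 48 \<le> a4^2 * (2 * b42^2 + b41^2)"
    using a4 by (intro mult_mono) auto
  moreover have "4 * t * (D * D * 4) \<le> 4 * t * (a4 * a2 * b42)"
    using a424 t by (intro mult_left_mono) auto
  moreover have "(t * a4 + 2 * a2 * b42)^2 - a4^2 * B3_denom p t
      = 4 * t * (a4 * a2 * b42) + 4 * a2^2 * b42^2 + a4^2 * (2 * b42^2 + b41^2)"
    unfolding B3_denom_def a2_def a4_def b42_def b41_def by (simp add: power2_eq_square algebra_simps)
  ultimately show ?thesis
    using zero_le_power2[of "a2 * b42"] unfolding a2_def[symmetric] a4_def[symmetric] b42_def[symmetric]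
    by (simp add: power2_eq_square power_mult_distrib algebra_simps)
qed

lemma B4_remainder_le:
  assumes p: "2 \<le> p" and D: "8 \<le> D" and t: "0 \<le> t"
  shows "2 * pnorm p D 3 ^ 2 * (pnorm p 3 3 * t + 2 * pnorm p 3 2 ^ 2)
    \<le> 2 * (73/64 * D^2) * (4243/1000 * t + 26)"
proof -
  note b = pnorm_constant_bounds[OF p]
  have "pnorm p D 3 ^ 2 \<le> D^2 + 9" using pnorm_sq_le[of D 3 p] p D by simp
  moreover have "8^2 \<le> D^2" using D by (intro power_mono) auto
  ultimately have "pnorm p D 3 ^ 2 \<le> 73/64 * D^2" by simp
  moreover have "pnorm p 3 3 * t \<le> 4243/1000 * t" using b(1) t by (intro mult_right_mono) auto
  then have "pnorm p 3 3 * t + 2 * pnorm p 3 2 ^ 2 \<le> 4243/1000 * t + 26" using b(2) by simp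
  ultimately show ?thesis
    using t pnorm_nonneg by (intro mult_mono mult_left_mono) (auto intro!: add_nonneg_nonneg mult_nonneg_nonneg)
qed

lemma B4_B3_remainders_less:
  assumes p: "2 \<le> p" and D: "8 \<le> D" and t: "22 \<le> t"
  defines "X \<equiv> t * pnorm p D 4 + 2 * pnorm p D 2 * pnorm p 4 2"
  shows "2 * pnorm p D 3 ^ 2 * (pnorm p 3 3 * t + 2 * pnorm p 3 2 ^ 2) / B4_denom p t
       < (X^2 - pnorm p D 4 ^ 2 * B3_denom p t) / B3_denom p t"
proof -
  define R3 R4 where "R3 = X^2 - pnorm p D 4 ^ 2 * B3_denom p t"
    and "R4 = 2 * pnorm p D 3 ^ 2 * (pnorm p 3 3 * t + 2 * pnorm p 3 2 ^ 2)"
  have R3: "D^2 * (16 * t + 48) \<le> R3" and R4: "R4 \<le> 2 * (73/64 * D^2) * (4243/1000 * t + 26)"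
    unfolding R3_def R4_def X_def using B3_remainder_ge[OF p] B4_remainder_le[OF p D] D t by simp_all
  have e3: "0 < B3_denom p t" "B3_denom p t \<le> t^2 - 48" using B3_denom_bounds[OF p] t by auto
  have "pnorm p 3 3 * t \<le> 4243/1000 * t"
    using pnorm_constant_bounds(1)[OF p] t by (intro mult_right_mono) auto
  then have "t^2 - 4243/1000 * t - 26 \<le> B4_denom p t"
    using pnorm_constant_bounds(2)[OF p] unfolding B4_denom_def by linarith
  then have e4: "0 < B4_denom p t" "t^2 - 4243/1000 * t - 26 \<le> B4_denom p t"
    using B4_denom_bounds(1)[OF p] t by auto
  have "22 * t \<le> t * t" using t by (intro mult_right_mono) auto
  then have "0 \<le> t^2 - 4243/1000 * t - 26" using t unfolding power2_eq_square by linarith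
  have cubic: "2 * (73/64) * (4243/1000 * t + 26) * (t^2 - 48) < (16 * t + 48) * (t^2 - 4243/1000 * t - 26)"
  proof -
    obtain e where e: "0 \<le> e" "t = 22 + e" using t by (metis le_add_diff_inverse diff_ge_0_iff_ge)
    have "(16 * t + 48) * (t^2 - 4243/1000 * t - 26) - 2 * (73/64) * (4243/1000 * t + 26) * (t^2 - 48)
      = 108628339/4000 + e * (44301723/8000 + e * (1081481/3200 + e * (202261/32000)))"
      unfolding e(2) by (simp add: power_numeral_reduce field_simps)
    also have "0 < \<dots>" using e(1) by (intro add_pos_nonneg mult_nonneg_nonneg add_nonneg_nonneg) auto
    finally show ?thesis by simp
  qed
  have "R4 * B3_denom p t \<le> (2 * (73/64 * D^2) * (4243/1000 * t + 26)) * (t^2 - 48)"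
    using R4 e3 t by (intro mult_mono) (auto simp: R4_def)
  also have "\<dots> = D^2 * (2 * (73/64) * (4243/1000 * t + 26) * (t^2 - 48))" by (simp add: algebra_simps)
  also have "\<dots> < D^2 * ((16 * t + 48) * (t^2 - 4243/1000 * t - 26))"
    using cubic D by (intro mult_strict_left_mono) auto
  also have "\<dots> = (D^2 * (16 * t + 48)) * (t^2 - 4243/1000 * t - 26)" by (simp add: algebra_simps)
  also have "\<dots> \<le> R3 * B4_denom p t"
    using R3 e4 \<open>0 \<le> t^2 - 4243/1000 * t - 26\<close> t
      order_trans[OF mult_nonneg_nonneg[OF zero_le_power2[of D], of "16 * t + 48"] R3]
    by (intro mult_mono) auto
  finally have "R4 * B3_denom p t < R3 * B4_denom p t" .
  then show ?thesis unfolding R3_def[symmetric] R4_def[symmetric] using e3 e4 by (simp add: divide_simps)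
qed

(* Subtracting the B4 equation leaves pnorm_sq_convex plus a comparison of the remainders
   of the two fractions. *)
lemma B3_secular_neg_at_B4_root:
  assumes p: "2 \<le> p" and D: "8 \<le> D" and t: "8 \<le> t" and root: "B4_secular p D t = 0"
  shows "B3_secular p D t < 0"
proof -
  have "8^3 \<le> D^3" using D by (intro power_mono) auto
  moreover have "D^3 \<le> t^2" using B4_secular_le[OF p _ t, of D] D root by simp
  ultimately have "22^2 \<le> t^2" by simp
  then have "22 \<le> t" by (rule power2_le_imp_le) (use t in auto)
  define X where "X = t * pnorm p D 4 + 2 * pnorm p D 2 * pnorm p 4 2"
  define R where "R = 2 * pnorm p D 3 ^ 2 * (pnorm p 3 3 * t + 2 * pnorm p 3 2 ^ 2)"
  have e3: "0 < B3_denom p t" and e4: "0 < B4_denom p t"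
    using B3_denom_bounds(1)[OF p t] B4_denom_bounds(1)[OF p t] .
  have "X^2 / B3_denom p t = pnorm p D 4 ^ 2 + (X^2 - pnorm p D 4 ^ 2 * B3_denom p t) / B3_denom p t"
    using e3 by (simp add: field_simps)
  moreover have "2 * pnorm p D 3 ^ 2 * t^2 / B4_denom p t = 2 * pnorm p D 3 ^ 2 + R / B4_denom p t"
    using e4 unfolding R_def by (simp add: B4_denom_def field_simps)
  moreover have "R / B4_denom p t < (X^2 - pnorm p D 4 ^ 2 * B3_denom p t) / B3_denom p t"
    using B4_B3_remainders_less[OF p D \<open>22 \<le> t\<close>] unfolding R_def X_def .
  moreover have "pnorm p D 1 ^ 2 + 2 * pnorm p D 3 ^ 2 \<le> pnorm p D 4 ^ 2 + 2 * pnorm p D 2 ^ 2"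
    using pnorm_sq_convex[of D p] p D by simp
  ultimately show ?thesis
    using root unfolding B3_secular_def B4_secular_def X_def[symmetric] by (simp add: algebra_simps)
qed

lemma B4_secular_pos_of_bounds:
  assumes "2 \<le> D" "0 \<le> M"
    and "pnorm p D 1 ^ 2 \<le> A1" "pnorm p D 3 ^ 2 \<le> A3" "pnorm p 3 3 \<le> B33" "pnorm p 3 2 ^ 2 \<le> B32"
    and "0 < M^2 - B33 * M - 2 * B32"
    and "0 < M^2 - (D - 2) * A1 - 2 * A3 * M^2 / (M^2 - B33 * M - 2 * B32)"
  shows "0 < B4_secular p D M"
proof -
  have "pnorm p 3 3 * M \<le> B33 * M" using assms by (intro mult_right_mono) auto
  then have "M^2 - B33 * M - 2 * B32 \<le> B4_denom p M" using assms unfolding B4_denom_def by linarith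
  then have "2 * pnorm p D 3 ^ 2 * M^2 / B4_denom p M \<le> 2 * A3 * M^2 / (M^2 - B33 * M - 2 * B32)"
    using assms order_trans[OF zero_le_power2 assms(4)] by (intro frac_le mult_right_mono) auto
  moreover have "(D - 2) * pnorm p D 1 ^ 2 \<le> (D - 2) * A1" using assms by (intro mult_left_mono) auto
  ultimately show ?thesis using assms unfolding B4_secular_def by linarith
qed

lemma B3_secular_neg_of_bounds:
  assumes "2 \<le> p" "3 \<le> D" "8 \<le> M"
    and "L1 \<le> pnorm p D 1" "L2 \<le> pnorm p D 2" "L4 \<le> pnorm p D 4" "L42 \<le> pnorm p 4 2" "L41 \<le> pnorm p 4 1"
    and "0 \<le> L1" "0 \<le> L2" "0 \<le> L4" "0 \<le> L42" "0 \<le> L41"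
    and "M^2 - (D - 3) * L1^2 - 2 * L2^2 - (M * L4 + 2 * L2 * L42)^2 / (M^2 - 2 * L42^2 - L41^2) < 0"
  shows "B3_secular p D M < 0"
proof -
  have sq: "L42^2 \<le> pnorm p 4 2 ^ 2" "L41^2 \<le> pnorm p 4 1 ^ 2" "L1^2 \<le> pnorm p D 1 ^ 2"
    "L2^2 \<le> pnorm p D 2 ^ 2"
    using assms by (auto intro!: power_mono)
  then have denom: "B3_denom p M \<le> M^2 - 2 * L42^2 - L41^2"
    unfolding B3_denom_def by linarith
  have L1: "(D - 3) * L1^2 \<le> (D - 3) * pnorm p D 1 ^ 2"
    using sq(3) assms by (intro mult_left_mono) auto
  have "M * L4 + 2 * L2 * L42 \<le> M * pnorm p D 4 + 2 * pnorm p D 2 * pnorm p 4 2"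
    using assms by (intro add_mono mult_left_mono mult_mono) auto
  then have "(M * L4 + 2 * L2 * L42)^2 \<le> (M * pnorm p D 4 + 2 * pnorm p D 2 * pnorm p 4 2)^2"
    using assms by (intro power_mono) auto
  then have "(M * L4 + 2 * L2 * L42)^2 / (M^2 - 2 * L42^2 - L41^2)
      \<le> (M * pnorm p D 4 + 2 * pnorm p D 2 * pnorm p 4 2)^2 / B3_denom p M"
    using denom B3_denom_bounds(1)[of p M] assms by (intro frac_le) auto
  then show ?thesis
    using assms L1 sq(4) unfolding B3_secular_def by linarith
qed

(* L here and U below bound pnorm via pnorm_ge_cubic and pnorm_le_cubic; each witness M lies
   between numerically computed roots of the secular functions with the entries so bounded. *)
lemma secular_sign_change_p_le_3:
  assumes p: "2 \<le> p" "p \<le> 3" and D: "D \<in> {4, 5, 6, 7}"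
  shows "\<exists>M. 8 \<le> M \<and> M \<le> D^2 \<and> 0 \<le> B4_secular p D M \<and> B3_secular p D M < 0"
proof -
  define L where "L x y = x * (1 + (y/x)^3 / 3 - ((y/x)^3)^2 / 9)" for x y :: real
  have L: "L x y \<le> pnorm p x y" if "0 < y" "y \<le> x" for x y
    unfolding L_def using pnorm_ge_cubic[OF that] p by simp
  have sign: "\<exists>M. 8 \<le> M \<and> M \<le> D^2 \<and> 0 \<le> B4_secular p D M \<and> B3_secular p D M < 0"
    if M: "8 \<le> M" "M \<le> D^2"
      and H: "0 < M^2 - 4243/1000 * M - 26"
        "0 < M^2 - (D - 2) * (D^2 + 1) - 2 * (D^2 + 9) * M^2 / (M^2 - 4243/1000 * M - 26)"
      and G: "0 \<le> L D 1" "0 \<le> L D 2" "0 \<le> L D 4" "0 \<le> L 4 2" "0 \<le> L 4 1"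
        "M^2 - (D - 3) * L D 1 ^ 2 - 2 * L D 2 ^ 2 - (M * L D 4 + 2 * L D 2 * L 4 2)^2
          / (M^2 - 2 * L 4 2 ^ 2 - L 4 1 ^ 2) < 0"
    for M
  proof (intro exI conjI)
    have "4 \<le> D" using D by auto
    show "0 \<le> B4_secular p D M"
      using pnorm_sq_le[of D 1 p] pnorm_sq_le[of D 3 p] pnorm_constant_bounds(1,2)[OF p(1)] p M H \<open>4 \<le> D\<close>
      by (intro less_imp_le[OF B4_secular_pos_of_bounds[of D M p "D^2 + 1" "D^2 + 9" "4243/1000" 13]]) auto
    show "B3_secular p D M < 0"
      using L[of 1 D] L[of 2 D] L[of 4 D] L[of 2 4] L[of 1 4] p M G \<open>4 \<le> D\<close>
      by (intro B3_secular_neg_of_bounds[of p D M "L D 1" "L D 2" "L D 4" "L 4 2" "L 4 1"]) auto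
  qed (use M in auto)
  from D consider "D = 4" | "D = 5" | "D = 6" | "D = 7" by auto
  then show ?thesis
  proof cases
    case 1
    show ?thesis by (rule sign[of 12]) (use 1 in \<open>simp_all add: L_def power_divide power2_eq_square\<close>)
  next
    case 2
    show ?thesis by (rule sign[of "141/10"]) (use 2 in \<open>simp_all add: L_def power_divide power2_eq_square\<close>)
  next
    case 3
    show ?thesis by (rule sign[of 17]) (use 3 in \<open>simp_all add: L_def power_divide power2_eq_square\<close>)
  next
    case 4
    show ?thesis by (rule sign[of "203/10"]) (use 4 in \<open>simp_all add: L_def power_divide power2_eq_square\<close>)
  qed
qed

lemma secular_sign_change_p_ge_3:
  assumes p: "3 \<le> p" and D: "D \<in> {4, 5, 6, 7}"
  shows "\<exists>M. 8 \<le> M \<and> M \<le> D^2 \<and> 0 \<le> B4_secular p D M \<and> B3_secular p D M < 0"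
proof -
  define U where "U x y = x * (1 + (y/x)^3 / 3)" for x y :: real
  have U: "pnorm p x y ^ 2 \<le> U x y ^ 2" if "0 < x" "0 < y" for x y
    unfolding U_def using pnorm_le_cubic[OF that] p by (intro power_mono pnorm_nonneg) auto
  have "U 3 3 = 4" unfolding U_def by simp
  then have U33: "pnorm p 3 3 \<le> 4" using pnorm_le_cubic[of 3 3 p] p unfolding U_def by simp
  have "4 \<le> D" using D by auto
  have sign: "\<exists>M. 8 \<le> M \<and> M \<le> D^2 \<and> 0 \<le> B4_secular p D M \<and> B3_secular p D M < 0"
    if M: "8 \<le> M" "M \<le> D^2"
      and H: "0 < M^2 - 4 * M - 2 * U 3 2 ^ 2"
        "0 < M^2 - (D - 2) * U D 1 ^ 2 - 2 * U D 3 ^ 2 * M^2 / (M^2 - 4 * M - 2 * U 3 2 ^ 2)"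
      and G: "M^2 - (D - 3) * D^2 - 2 * D^2 - (M * D + 2 * D * 4)^2 / (M^2 - 2 * 4^2 - 4^2) < 0"
    for M
  proof (intro exI conjI)
    show "0 \<le> B4_secular p D M"
      using U[of D 1] U[of D 3] U[of 3 2] U33 M H \<open>4 \<le> D\<close>
      by (intro less_imp_le[OF B4_secular_pos_of_bounds[of D M p "U D 1 ^ 2" "U D 3 ^ 2" 4 "U 3 2 ^ 2"]]) auto
    show "B3_secular p D M < 0"
      using pnorm_ge_left[of D _ p] pnorm_ge_left[of 4 _ p] p M G \<open>4 \<le> D\<close>
      by (intro B3_secular_neg_of_bounds[of p D M D D D 4 4]) auto
  qed (use M in auto)
  from D consider "D = 4" | "D = 5" | "D = 6" | "D = 7" by auto
  then show ?thesis
  proof cases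
    case 1
    show ?thesis by (rule sign[of "111/10"]) (use 1 in \<open>simp_all add: U_def power_divide power2_eq_square\<close>)
  next
    case 2
    show ?thesis by (rule sign[of "67/5"]) (use 2 in \<open>simp_all add: U_def power_divide power2_eq_square\<close>)
  next
    case 3
    show ?thesis by (rule sign[of "82/5"]) (use 3 in \<open>simp_all add: U_def power_divide power2_eq_square\<close>)
  next
    case 4
    show ?thesis by (rule sign[of "99/5"]) (use 4 in \<open>simp_all add: U_def power_divide power2_eq_square\<close>)
  qed
qed

lemma secular_sign_change:
  assumes p: "2 \<le> p" and n: "6 \<le> n"
  defines "D \<equiv> real n - 2"
  shows "\<exists>M. 8 \<le> M \<and> M \<le> D^2 \<and> 0 \<le> B4_secular p D M \<and> B3_secular p D M < 0"
proof (cases "n \<le> 9")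
  case True
  then have "D \<in> {4, 5, 6, 7}" using n unfolding D_def by (auto simp: le_Suc_eq eval_nat_numeral)
  then show ?thesis
    using secular_sign_change_p_le_3[OF p] secular_sign_change_p_ge_3 by (cases "p \<le> 3") auto
next
  case False
  then have D: "8 \<le> D" unfolding D_def by simp
  have "8^2 \<le> D^2" using D by (intro power_mono) auto
  then obtain M where M: "8 \<le> M" "M \<le> D^2" "B4_secular p D M = 0"
    using IVT[of "B4_secular p D" 8 0 "D^2"] B4_secular_at_8_nonpos[OF p] B4_secular_at_sq_pos[OF p D]
      isCont_B4_secular[OF p] D by force
  then show ?thesis using B3_secular_neg_at_B4_root[OF p D M(1,3)] by auto
qed

lemma secular_roots_separated:
  assumes p: "2 \<le> p" and n: "6 \<le> n"
  defines "D \<equiv> real n - 2"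
  shows "\<exists>t4 t3. 8 \<le> t4 \<and> t4 < t3 \<and> B4_secular p D t4 = 0 \<and> B3_secular p D t3 = 0"
proof -
  obtain M where M: "8 \<le> M" "M \<le> D^2" "0 \<le> B4_secular p D M" "B3_secular p D M < 0"
    using secular_sign_change[OF p n] unfolding D_def by blast
  have "4 \<le> D" using n unfolding D_def by simp
  obtain t4 where t4: "8 \<le> t4" "t4 \<le> M" "B4_secular p D t4 = 0"
    using IVT[of "B4_secular p D" 8 0 M] B4_secular_at_8_nonpos[OF p \<open>4 \<le> D\<close>] M isCont_B4_secular[OF p]
    by force
  obtain t3 where t3: "M \<le> t3" "t3 \<le> D^2" "B3_secular p D t3 = 0"
    using IVT[of "B3_secular p D" M 0 "D^2"] B3_secular_at_sq_pos[OF p \<open>4 \<le> D\<close>] M isCont_B3_secular[OF p]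
    by force
  have "t3 \<noteq> M" using t3(3) M(4) by auto
  then show ?thesis using t4 t3 by (intro exI[of _ t4] exI[of _ t3]) auto
qed

theorem lemma5p1:
  fixes n :: nat and p :: real
  assumes "n \<ge> 6" and "p \<ge> 2"
  shows "rho (sombor_matrix n B4_edge p) < rho (sombor_matrix n B3_edge p)"
proof -
  obtain t4 t3 where t: "8 \<le> t4" "t4 < t3"
    and roots: "B4_secular p (real n - 2) t4 = 0" "B3_secular p (real n - 2) t3 = 0"
    using secular_roots_separated[OF assms(2,1)] by blast
  have "rho (sombor_matrix n B4_edge p) = t4"
    using B4_rho_eq_root[OF assms t(1) roots(1)] .
  moreover have "eigenvalue (sombor_matrix n B3_edge p) t3"
    using B3_eigenvalue[OF assms _ roots(2)] t by simp
  then have "t3 \<le> rho (sombor_matrix n B3_edge p)"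
    by (rule eigenvalue_le_rho[OF sombor_matrix_carrier])
  ultimately show ?thesis using t(2) by simp
qed

end
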